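(* Let $q$ be a prime power, $m\ge1$, $j\ge1$, let $G\in GF(q^m)[x]$ be separable with a factorization $G=\prod_{i=1}^{l}G_i$ into pairwise coprime factors, and let $L=\{\alpha_1,\dots,\alpha_n\}\subseteq GF(q^m)$ with $G(\alpha_k)\ne0$ for all $k$. Put $G_i^{(j)}=G_i^j$ and $G^{(j)}=G^j=\prod_{i=1}^l G_i^{(j)}$. If $r_i$ denotes the redundancy ($n$ minus the dimension) of the code $\Gamma(L,G_i^{(j)})$, then the dimension $k$ of $\Gamma(L,G^{(j)})$ satisfies $k\ge n-\sum_{i=1}^l r_i$.
   Context: For a set $L=\{\alpha_1,\dots,\alpha_n\}$ of distinct elements of $GF(q^m)$ and $P\in GF(q^m)[x]$ with $P(\alpha_k)\neq0$ for all $k$, the $q$-ary Goppa code is $\Gamma(L,P)=\{c\in GF(q)^n:\ \sum_k \frac{c_k}{x-\alpha_k}\equiv 0 \pmod{P(x)}\}$, a $GF(q)$-linear code; dimensions are over $GF(q)$. *)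

theory Defs
  imports "HOL-Library.Function_Algebras" "HOL-Computational_Algebra.Polynomial"
begin

definition separable_poly :: "'a::field poly \<Rightarrow> bool" where
  "separable_poly G \<longleftrightarrow> coprime G (pderiv G)"

text \<open>An inverse of (x - a) modulo P (exists when P(a) is nonzero).\<close>
definition lin_inv_mod :: "'a::field poly \<Rightarrow> 'a \<Rightarrow> 'a poly" where
  "lin_inv_mod P a = (SOME u. P dvd ([:-a, 1:] * u - 1))"

text \<open>Goppa code over the small field 'f (GF(q)), embedded into 'a (GF(q^m)) by phi.
  Codewords are c : nat => 'f supported on {0..<n}.
  Condition: sum_k c_k/(x - alpha_k) = 0 mod P.\<close>
definition goppa_code ::
  "('f::field \<Rightarrow> 'a::field) \<Rightarrow> (nat \<Rightarrow> 'a) \<Rightarrow> nat \<Rightarrow> 'a poly \<Rightarrow> (nat \<Rightarrow> 'f) set" where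
  "goppa_code \<phi> \<alpha> n P = {c. (\<forall>k\<ge>n. c k = 0) \<and>
      P dvd (\<Sum>k<n. smult (\<phi> (c k)) (lin_inv_mod P (\<alpha> k)))}"

definition code_dim :: "(nat \<Rightarrow> 'f::field) set \<Rightarrow> nat" where
  "code_dim C = vector_space.dim (\<lambda>(a::'f) (c::nat \<Rightarrow> 'f). (\<lambda>k. a * c k)) C"

end

theory Submission
  imports Defs
begin

text \<open>
  If \<open>Q\<close> divides \<open>P\<close>, then inverses of \<open>x - \<alpha>\<close> modulo \<open>P\<close> are also inverses modulo \<open>Q\<close>,
  and such inverses are unique modulo \<open>Q\<close>; so the syndrome of a word with respect to \<open>P\<close>
  is congruent modulo \<open>Q\<close> to its syndrome with respect to \<open>Q\<close>. Hence a word lying in every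
  \<open>\<Gamma>(L, G\<^sub>i\<^sup>j)\<close> has a syndrome with respect to \<open>G\<^sup>j\<close> that is divisible by all the pairwise coprime
  \<open>G\<^sub>i\<^sup>j\<close>, hence by their product \<open>G\<^sup>j\<close>: the intersection of the codes \<open>\<Gamma>(L, G\<^sub>i\<^sup>j)\<close> is contained
  in \<open>\<Gamma>(L, G\<^sup>j)\<close>. Finally, \<open>dim A + dim B \<le> dim (A \<inter> B) + n\<close> for subspaces of \<open>GF(q)\<^sup>n\<close>, so an
  intersection of subspaces of redundancies \<open>r\<^sub>i\<close> has redundancy at most \<open>\<Sum> r\<^sub>i\<close>.
\<close>

section \<open>Coprimality in Euclidean rings\<close>

lemma euclidean_coprime_bezout:
  fixes a b :: "'a::euclidean_ring"
  assumes "coprime a b"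
  obtains x y where "x * a + y * b = 1"
proof -
  define I where "I = {x * a + y * b | x y. True}"
  have aI: "a \<in> I" and bI: "b \<in> I"
    unfolding I_def by (force intro: exI[of _ 1] exI[of _ 0])+
  have "a \<noteq> 0 \<or> b \<noteq> 0"
    using assms by auto
  then have "\<exists>d. d \<in> I \<and> d \<noteq> 0" using aI bI by blast
  then obtain d where dI: "d \<in> I" and d0: "d \<noteq> 0"
    and least: "\<And>e. e \<in> I \<Longrightarrow> e \<noteq> 0 \<Longrightarrow> euclidean_size d \<le> euclidean_size e"
    using ex_has_least_nat[of "\<lambda>d. d \<in> I \<and> d \<noteq> 0" _ euclidean_size] by blast
  from dI obtain x y where dxy: "d = x * a + y * b" unfolding I_def by blast
  \<comment> \<open>\<open>I\<close> is closed under remainders modulo \<open>d\<close>, so by minimality \<open>d\<close> divides all of \<open>I\<close>.\<close>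
  have "d dvd c" if "c \<in> I" for c
  proof (rule ccontr)
    from that obtain u v where cuv: "c = u * a + v * b" unfolding I_def by blast
    have "c mod d = (u - c div d * x) * a + (v - c div d * y) * b"
      by (simp add: minus_div_mult_eq_mod[symmetric] cuv dxy algebra_simps)
    then have "c mod d \<in> I" unfolding I_def by blast
    moreover assume "\<not> d dvd c"
    ultimately have "euclidean_size d \<le> euclidean_size (c mod d)"
      by (simp add: least mod_eq_0_iff_dvd)
    with mod_size_less[OF d0, of c] show False by simp
  qed
  with aI bI assms have "is_unit d" by (meson coprime_common_divisor)
  then obtain k where "1 = d * k" by (auto elim: dvdE)
  then have "(k * x) * a + (k * y) * b = 1" by (simp add: dxy algebra_simps)
  then show thesis by (rule that)
qed

lemma euclidean_coprime_mult_left: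
  fixes a b c :: "'a::euclidean_ring"
  assumes "coprime a c" "coprime b c"
  shows "coprime (a * b) c"
proof (rule coprimeI)
  obtain x y where xy: "x * a + y * c = 1" using euclidean_coprime_bezout[OF assms(1)] .
  obtain x' y' where xy': "x' * b + y' * c = 1" using euclidean_coprime_bezout[OF assms(2)] .
  have "(x * x') * (a * b) + (x * a * y' + y * x' * b + y * y' * c) * c = 1"
    using arg_cong2[OF xy xy', of "(*)"] by (simp add: algebra_simps)
  moreover fix d assume "d dvd a * b" "d dvd c"
  ultimately show "is_unit d"
    by (metis dvd_add dvd_mult)
qed

lemma euclidean_coprime_power:
  fixes a b :: "'a::euclidean_ring"
  assumes "coprime a b"
  shows "coprime (a ^ i) (b ^ j)"
proof -
  have power_left: "coprime (a ^ i) c" if "coprime a c" for a c :: 'a and i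
    by (induction i) (simp_all add: euclidean_coprime_mult_left that)
  show ?thesis
    using power_left[of b "a ^ i"] power_left[OF assms] by (simp add: coprime_commute)
qed

lemma euclidean_coprime_prod_left:
  fixes f :: "'b \<Rightarrow> 'a::euclidean_ring"
  assumes "\<And>i. i \<in> A \<Longrightarrow> coprime (f i) c"
  shows "coprime (\<Prod>i\<in>A. f i) c"
  using assms
  by (induction A rule: infinite_finite_induct) (simp_all add: euclidean_coprime_mult_left)

lemma euclidean_divides_mult:
  fixes a b c :: "'a::euclidean_ring"
  assumes "coprime a b" "a dvd c" "b dvd c"
  shows "a * b dvd c"
proof -
  obtain x y where xy: "x * a + y * b = 1" using euclidean_coprime_bezout[OF assms(1)] .
  obtain s where s: "c = a * s" using assms(2) ..
  obtain t where t: "c = b * t" using assms(3) ..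
  have "c = (x * a + y * b) * c" by (simp add: xy)
  also have "\<dots> = x * a * (b * t) + y * b * (a * s)"
    using s t by (simp add: algebra_simps)
  also have "\<dots> = (a * b) * (x * t + y * s)"
    by (simp add: algebra_simps)
  finally show ?thesis by (metis dvd_triv_left)
qed

lemma euclidean_prod_dvd_pairwise_coprime:
  fixes f :: "nat \<Rightarrow> 'a::euclidean_ring"
  assumes "\<And>i. i < l \<Longrightarrow> f i dvd c"
    and "\<And>i i'. i < l \<Longrightarrow> i' < l \<Longrightarrow> i \<noteq> i' \<Longrightarrow> coprime (f i) (f i')"
  shows "(\<Prod>i<l. f i) dvd c"
  using assms
proof (induction l)
  case (Suc l)
  have "coprime (\<Prod>i<l. f i) (f l)"
    by (rule euclidean_coprime_prod_left) (simp add: Suc.prems(2))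
  then show ?case
    by (simp add: Suc euclidean_divides_mult)
qed simp

section \<open>Dimensions of intersections of subspaces\<close>

context vector_space
begin

lemma dim_subset_of_finite_span:
  assumes "finite E" "T \<subseteq> span E" "S \<subseteq> T"
  shows "dim S \<le> dim T"
proof -
  obtain B where B: "B \<subseteq> T" "independent B" "T \<subseteq> span B" "card B = dim T"
    by (rule basis_exists)
  have "finite B"
    using independent_span_bound[OF assms(1) B(2)] B(1) assms(2) by blast
  then have "dim S \<le> card B"
    using assms(3) B(3) by (intro dim_le_card) auto
  with B(4) show ?thesis by simp
qed

lemma dim_insert_of_finite_span:
  assumes "finite E" "S \<subseteq> span E" "x \<notin> span S"
  shows "dim (insert x S) = Suc (dim S)"
proof -
  obtain B where B: "B \<subseteq> S" "independent B" "S \<subseteq> span B" "card B = dim S"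
    by (rule basis_exists)
  have "finite B"
    using independent_span_bound[OF assms(1) B(2)] B(1) assms(2) by blast
  have "x \<notin> span B"
    using assms(3) span_mono[OF B(1)] by blast
  show ?thesis
  proof (rule dim_unique)
    show "insert x B \<subseteq> insert x S" using B(1) by blast
    show "insert x S \<subseteq> span (insert x B)"
      using B(3) span_mono[of B "insert x B"] span_base[of x "insert x B"] by blast
    show "independent (insert x B)" by (rule independent_insertI[OF \<open>x \<notin> span B\<close> B(2)])
    show "card (insert x B) = Suc (dim S)"
      using \<open>finite B\<close> \<open>x \<notin> span B\<close> span_base[of x B] B(4) by (metis card_insert_disjoint)
  qed
qed

lemma subspace_meets_span_insert:
  assumes "subspace B" "x \<notin> span X" "x \<in> span (B \<union> X)"
  obtains b where "b \<in> B" "b \<in> span (insert x X)" "b \<notin> span X"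
proof -
  from assms(3) obtain b y where xby: "x = b + y" and b: "b \<in> span B" and y: "y \<in> span X"
    unfolding span_Un by blast
  have "b \<in> B" using b assms(1) by (metis span_eq_iff)
  moreover have "b \<in> span (insert x X)"
    using xby span_diff[of x "insert x X" y] span_base[of x "insert x X"]
      span_mono[of X "insert x X"] y by (auto simp: eq_diff_eq)
  moreover have "b \<notin> span X"
    using xby y assms(2) span_add by fastforce
  ultimately show thesis by (rule that)
qed

lemma dim_add_le_dim_span_Int_add_dim_Un:
  assumes E: "finite E" and B: "subspace B" "B \<subseteq> span E"
    and X: "finite X" "X \<subseteq> span E"
  shows "dim X + dim B \<le> dim (span X \<inter> B) + dim (B \<union> X)"
  using X
proof (induction X rule: finite_induct)
  case empty
  have "dim {} = 0" by (rule dim_unique[of "{}"]) (auto simp: dependent_def)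
  then show ?case by simp
next
  case (insert x X)
  then have XE: "X \<subseteq> span E" and xE: "x \<in> span E" by auto
  have IH: "dim X + dim B \<le> dim (span X \<inter> B) + dim (B \<union> X)"
    using insert.IH XE .
  have E1: "span (insert x X) \<inter> B \<subseteq> span E" using B(2) by blast
  have sub1: "span X \<inter> B \<subseteq> span (insert x X) \<inter> B" using span_mono[of X "insert x X"] by blast
  have mono1: "dim (span X \<inter> B) \<le> dim (span (insert x X) \<inter> B)"
    by (rule dim_subset_of_finite_span[OF E E1 sub1])
  have mono2: "dim (B \<union> X) \<le> dim (B \<union> insert x X)"
    by (rule dim_subset_of_finite_span[OF E]) (use B(2) XE xE in auto)
  show ?case
  proof (cases "x \<in> span X")
    case True
    then have "dim (insert x X) = dim X" by (metis dim_span span_redundant)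
    then show ?thesis using IH mono1 mono2 by linarith
  next
    case xX: False
    have dX: "dim (insert x X) = Suc (dim X)" by (rule dim_insert_of_finite_span[OF E XE xX])
    show ?thesis
    proof (cases "x \<in> span (B \<union> X)")
      case True
      \<comment> \<open>The new vector does not enlarge \<open>B \<union> X\<close>, but it brings a new vector into the intersection.\<close>
      have "dim (B \<union> insert x X) = dim (B \<union> X)"
        using True by (metis Un_insert_right dim_span span_redundant)
      moreover obtain b where "b \<in> B" "b \<in> span (insert x X)" "b \<notin> span X"
        using subspace_meets_span_insert[OF B(1) xX True] .
      then have "b \<notin> span (span X \<inter> B)"
        using span_minimal[of "span X \<inter> B" "span X"] subspace_span by blast
      then have "dim (insert b (span X \<inter> B)) = Suc (dim (span X \<inter> B))"
        by (rule dim_insert_of_finite_span[OF E, rotated]) (use B(2) in blast)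
      moreover have "dim (insert b (span X \<inter> B)) \<le> dim (span (insert x X) \<inter> B)"
        by (rule dim_subset_of_finite_span[OF E E1]) (use sub1 \<open>b \<in> B\<close> \<open>b \<in> span (insert x X)\<close> in blast)
      ultimately show ?thesis using IH dX by linarith
    next
      case False
      have "dim (B \<union> insert x X) = Suc (dim (B \<union> X))"
        using dim_insert_of_finite_span[OF E _ False] B(2) XE by simp
      then show ?thesis using IH dX mono1 by linarith
    qed
  qed
qed

lemma dim_add_le_dim_Int_add:
  assumes E: "finite E" and A: "subspace A" "A \<subseteq> span E" and B: "subspace B" "B \<subseteq> span E"
  shows "dim A + dim B \<le> dim (A \<inter> B) + dim E"
proof -
  obtain X where X: "X \<subseteq> A" "independent X" "A \<subseteq> span X" "card X = dim A"
    by (rule basis_exists)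
  have "finite X"
    using independent_span_bound[OF E X(2)] X(1) A(2) by blast
  have spX: "span X = A" by (rule span_subspace[OF X(1) X(3) A(1)])
  have "dim X + dim B \<le> dim (span X \<inter> B) + dim (B \<union> X)"
    by (rule dim_add_le_dim_span_Int_add_dim_Un[OF E B \<open>finite X\<close>]) (use X(1) A(2) in blast)
  moreover have "dim (B \<union> X) \<le> dim (span E)"
    by (rule dim_subset_of_finite_span[OF E]) (use X(1) A(2) B(2) in auto)
  ultimately show ?thesis
    using spX dim_span[of X] dim_span[of E] by simp
qed

lemma dim_Inter_ge:
  fixes C :: "nat \<Rightarrow> 'b set"
  assumes "finite E" "\<And>i. subspace (C i)" "\<And>i. C i \<subseteq> span E"
  shows "int (dim (span E \<inter> (\<Inter>i<l. C i)))
           \<ge> int (dim E) - (\<Sum>i<l. int (dim E) - int (dim (C i)))"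
proof (induction l)
  case (Suc l)
  let ?D = "span E \<inter> (\<Inter>i<l. C i)"
  have "subspace ?D"
    using assms(2) by (auto simp: subspace_def span_zero span_add span_scale)
  then have "dim ?D + dim (C l) \<le> dim (?D \<inter> C l) + dim E"
    using assms by (intro dim_add_le_dim_Int_add) auto
  moreover have "span E \<inter> (\<Inter>i<Suc l. C i) = ?D \<inter> C l"
    by (auto simp: lessThan_Suc)
  ultimately show ?case
    using Suc.IH by simp
qed simp

end

section \<open>Syndromes of Goppa codes\<close>

lemma smult_sum_right: "smult a (\<Sum>i\<in>A. f i) = (\<Sum>i\<in>A. smult a (f i))"
  by (induction A rule: infinite_finite_induct) (simp_all add: smult_add_right)

lemma lin_inv_mod_correct:
  fixes P :: "'a::field poly"
  assumes "poly P a \<noteq> 0"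
  shows "P dvd [:-a, 1:] * lin_inv_mod P a - 1"
proof -
  define c where "c = poly P a"
  define u where "u = smult (- inverse c) (synthetic_div P a)"
  have "[:-a, 1:] * synthetic_div P a + [:c:] = P"
    unfolding c_def by (rule synthetic_div_correct')
  then have "[:-a, 1:] * synthetic_div P a = P - [:c:]"
    by (simp add: algebra_simps)
  then have "[:-a, 1:] * u = smult (- inverse c) (P - [:c:])"
    by (simp add: u_def mult_smult_right)
  also have "\<dots> = smult (- inverse c) P + 1"
    using assms by (simp add: c_def smult_diff_right one_pCons)
  finally have "[:-a, 1:] * u - 1 = P * [:- inverse c:]"
    by simp
  then have "\<exists>u. P dvd [:-a, 1:] * u - 1" by (metis dvd_triv_left)
  then show ?thesis unfolding lin_inv_mod_def by (rule someI_ex)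
qed

lemma inverse_mod_unique:
  fixes Q p v w :: "'a::comm_ring_1"
  assumes "Q dvd p * v - 1" "Q dvd p * w - 1"
  shows "Q dvd w - v"
proof -
  have "Q dvd p * (w - v)"
    using dvd_diff[OF assms(2,1)] by (simp add: algebra_simps)
  moreover have "w - v = v * (p * (w - v)) - (p * v - 1) * (w - v)"
    by (simp add: algebra_simps)
  ultimately show ?thesis
    using assms(1) by (metis dvd_diff dvd_mult dvd_mult2)
qed

lemma lin_inv_mod_dvd_diff:
  fixes P Q :: "'a::field poly"
  assumes "poly P a \<noteq> 0" "Q dvd P"
  shows "Q dvd lin_inv_mod P a - lin_inv_mod Q a"
proof (rule inverse_mod_unique)
  have "poly Q a \<noteq> 0"
    using assms by (auto elim!: dvdE)
  then show "Q dvd [:-a, 1:] * lin_inv_mod Q a - 1"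
    by (rule lin_inv_mod_correct)
  show "Q dvd [:-a, 1:] * lin_inv_mod P a - 1"
    using assms(2) lin_inv_mod_correct[OF assms(1)] by (rule dvd_trans)
qed

definition goppa_syndrome ::
  "('f::field \<Rightarrow> 'a::field) \<Rightarrow> (nat \<Rightarrow> 'a) \<Rightarrow> nat \<Rightarrow> 'a poly \<Rightarrow> (nat \<Rightarrow> 'f) \<Rightarrow> 'a poly" where
  "goppa_syndrome \<phi> \<alpha> n P c = (\<Sum>k<n. smult (\<phi> (c k)) (lin_inv_mod P (\<alpha> k)))"

definition words :: "nat \<Rightarrow> (nat \<Rightarrow> 'f::zero) set" where
  "words n = {c. \<forall>k\<ge>n. c k = 0}"

lemma goppa_code_eq:
  "goppa_code \<phi> \<alpha> n P = words n \<inter> {c. P dvd goppa_syndrome \<phi> \<alpha> n P c}"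
  by (auto simp: goppa_code_def words_def goppa_syndrome_def)

lemma dvd_goppa_syndrome_iff:
  assumes "Q dvd P" "\<And>k. k < n \<Longrightarrow> poly P (\<alpha> k) \<noteq> 0"
  shows "Q dvd goppa_syndrome \<phi> \<alpha> n P c \<longleftrightarrow> Q dvd goppa_syndrome \<phi> \<alpha> n Q c"
proof -
  have "Q dvd goppa_syndrome \<phi> \<alpha> n P c - goppa_syndrome \<phi> \<alpha> n Q c"
    unfolding goppa_syndrome_def sum_subtractf[symmetric] smult_diff_right[symmetric]
    using assms by (intro dvd_sum dvd_smult lin_inv_mod_dvd_diff) auto
  then show ?thesis
    using dvd_add_right_iff by (metis diff_add_cancel)
qed

lemma goppa_code_prod:
  fixes F :: "nat \<Rightarrow> 'a::field poly"
  assumes "\<And>i i'. i < l \<Longrightarrow> i' < l \<Longrightarrow> i \<noteq> i' \<Longrightarrow> coprime (F i) (F i')"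
    and "\<And>k. k < n \<Longrightarrow> poly (\<Prod>i<l. F i) (\<alpha> k) \<noteq> 0"
  shows "words n \<inter> (\<Inter>i<l. goppa_code \<phi> \<alpha> n (F i)) \<subseteq> goppa_code \<phi> \<alpha> n (\<Prod>i<l. F i)"
proof
  fix c assume c: "c \<in> words n \<inter> (\<Inter>i<l. goppa_code \<phi> \<alpha> n (F i))"
  have "F i dvd goppa_syndrome \<phi> \<alpha> n (\<Prod>i<l. F i) c" if "i < l" for i
  proof -
    have "F i dvd (\<Prod>i<l. F i)"
      using that by (intro dvd_prodI) auto
    moreover have "c \<in> goppa_code \<phi> \<alpha> n (F i)"
      using c that by blast
    then have "F i dvd goppa_syndrome \<phi> \<alpha> n (F i) c"
      by (simp add: goppa_code_eq)
    ultimately show ?thesis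
      using dvd_goppa_syndrome_iff assms(2) by blast
  qed
  then have "(\<Prod>i<l. F i) dvd goppa_syndrome \<phi> \<alpha> n (\<Prod>i<l. F i) c"
    using assms(1) by (rule euclidean_prod_dvd_pairwise_coprime)
  with c show "c \<in> goppa_code \<phi> \<alpha> n (\<Prod>i<l. F i)"
    by (simp add: goppa_code_eq)
qed

section \<open>Goppa codes as subspaces\<close>

interpretation words: vector_space "\<lambda>(a::'f::field) (c::nat \<Rightarrow> 'f). (\<lambda>k. a * c k)"
  by unfold_locales (simp_all add: fun_eq_iff algebra_simps)

definition unit_words :: "nat \<Rightarrow> (nat \<Rightarrow> 'f::{zero,one}) set" where
  "unit_words n = (\<lambda>k i. if i = k then 1 else 0) ` {..<n}"

lemma sum_fun_apply: "(\<Sum>k\<in>A. f k) i = (\<Sum>k\<in>A. f k i)"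
  by (induction A rule: infinite_finite_induct) auto

lemma span_unit_words: "words.span (unit_words n) = (words n :: (nat \<Rightarrow> 'f::field) set)"
proof
  have "words.subspace (words n :: (nat \<Rightarrow> 'f) set)"
    by (auto simp: words.subspace_def words_def)
  then show "words.span (unit_words n) \<subseteq> (words n :: (nat \<Rightarrow> 'f) set)"
    by (rule words.span_minimal[rotated]) (auto simp: unit_words_def words_def)
next
  show "words n \<subseteq> words.span (unit_words n :: (nat \<Rightarrow> 'f) set)"
  proof
    fix c :: "nat \<Rightarrow> 'f" assume c: "c \<in> words n"
    have "c = (\<Sum>k<n. (\<lambda>i. c k * (if i = k then 1 else 0)))"
    proof
      fix i
      show "c i = (\<Sum>k<n. (\<lambda>i. c k * (if i = k then 1 else 0))) i"
        using c by (auto simp: sum_fun_apply words_def if_distrib cong: if_cong)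
    qed
    also have "\<dots> \<in> words.span (unit_words n)"
      by (intro words.span_sum words.span_scale words.span_base) (auto simp: unit_words_def)
    finally show "c \<in> words.span (unit_words n)" .
  qed
qed

lemma independent_unit_words: "words.independent (unit_words n :: (nat \<Rightarrow> 'f::field) set)"
proof
  assume "words.dependent (unit_words n :: (nat \<Rightarrow> 'f) set)"
  then obtain e :: "nat \<Rightarrow> 'f" where e: "e \<in> unit_words n" and span: "e \<in> words.span (unit_words n - {e})"
    unfolding words.dependent_def by blast
  from e obtain k where ek: "e = (\<lambda>i. if i = k then 1 else 0)"
    unfolding unit_words_def by blast
  have "words.span (unit_words n - {e}) \<subseteq> {v. v k = 0}"
  proof (rule words.span_minimal)
    show "unit_words n - {e} \<subseteq> {v. v k = 0}"
      using ek by (auto simp: unit_words_def)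
    show "words.subspace {v :: nat \<Rightarrow> 'f. v k = 0}"
      by (auto simp: words.subspace_def)
  qed
  with span ek show False by auto
qed

lemma dim_unit_words: "words.dim (unit_words n :: (nat \<Rightarrow> 'f::field) set) = n"
proof -
  have "inj_on (\<lambda>k i. if i = k then (1::'f) else 0) {..<n}"
    by (rule inj_onI) (metis one_neq_zero)
  then have "card (unit_words n :: (nat \<Rightarrow> 'f) set) = n"
    by (simp add: unit_words_def card_image)
  then show ?thesis
    by (simp add: words.dim_eq_card_independent[OF independent_unit_words])
qed

lemma goppa_code_subspace:
  assumes "\<And>a b. \<phi> (a + b) = \<phi> a + \<phi> b" "\<And>a b. \<phi> (a * b) = \<phi> a * \<phi> b"
  shows "words.subspace (goppa_code \<phi> \<alpha> n P)"
proof (rule words.subspaceI)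
  have "\<phi> 0 = 0"
    using assms(1)[of 0 0] by (metis add_cancel_right_right)
  then show "0 \<in> goppa_code \<phi> \<alpha> n P"
    by (simp add: goppa_code_def)
next
  fix x y assume "x \<in> goppa_code \<phi> \<alpha> n P" "y \<in> goppa_code \<phi> \<alpha> n P"
  then show "x + y \<in> goppa_code \<phi> \<alpha> n P"
    by (auto simp: goppa_code_def assms(1) smult_add_left sum.distrib intro: dvd_add)
next
  fix a x assume "x \<in> goppa_code \<phi> \<alpha> n P"
  moreover have "goppa_syndrome \<phi> \<alpha> n P (\<lambda>k. a * x k) = smult (\<phi> a) (goppa_syndrome \<phi> \<alpha> n P x)"
    by (simp add: goppa_syndrome_def assms(2) smult_sum_right)
  ultimately show "(\<lambda>k. a * x k) \<in> goppa_code \<phi> \<alpha> n P"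
    by (auto simp: goppa_code_eq words_def intro: dvd_smult)
qed

theorem lemma2:
  fixes \<phi> :: "'f::{field,finite} \<Rightarrow> 'a::{field,finite}"
    and q m j n l :: nat
    and G :: "'a poly" and Gs :: "nat \<Rightarrow> 'a poly" and \<alpha> :: "nat \<Rightarrow> 'a"
  assumes q: "card (UNIV::'f set) = q" and qm: "card (UNIV::'a set) = q ^ m" and m: "m \<ge> 1" and j: "j \<ge> 1"
    and hom_add: "\<And>a b. \<phi> (a + b) = \<phi> a + \<phi> b"
    and hom_mult: "\<And>a b. \<phi> (a * b) = \<phi> a * \<phi> b"
    and hom_one: "\<phi> 1 = 1"
    and sep: "separable_poly G"
    and fact: "G = (\<Prod>i<l. Gs i)"
    and cop: "\<And>i i'. i < l \<Longrightarrow> i' < l \<Longrightarrow> i \<noteq> i' \<Longrightarrow> coprime (Gs i) (Gs i')"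
    and dist: "inj_on \<alpha> {..<n}"
    and nz: "\<And>k. k < n \<Longrightarrow> poly G (\<alpha> k) \<noteq> 0"
  shows "int (code_dim (goppa_code \<phi> \<alpha> n (G ^ j)))
           \<ge> int n - (\<Sum>i<l. int n - int (code_dim (goppa_code \<phi> \<alpha> n (Gs i ^ j))))"
proof -
  \<comment> \<open>Only additivity and multiplicativity of \<open>\<phi>\<close>, the coprimality of the factors and \<open>G(\<alpha>\<^sub>k) \<noteq> 0\<close>
    are used.\<close>
  let ?\<Gamma> = "goppa_code \<phi> \<alpha> n"
  have fin: "finite (unit_words n :: (nat \<Rightarrow> 'f) set)"
    by (simp add: unit_words_def)
  have codes: "words.subspace (?\<Gamma> P)" "?\<Gamma> P \<subseteq> words.span (unit_words n)" for P
    using goppa_code_subspace[OF hom_add hom_mult] by (auto simp: span_unit_words goppa_code_eq)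
  have Gj: "G ^ j = (\<Prod>i<l. Gs i ^ j)"
    by (simp add: fact prod_power_distrib)
  have "words n \<inter> (\<Inter>i<l. ?\<Gamma> (Gs i ^ j)) \<subseteq> ?\<Gamma> (\<Prod>i<l. Gs i ^ j)"
    using cop nz by (intro goppa_code_prod) (simp_all flip: Gj add: euclidean_coprime_power)
  then have "words.dim (words n \<inter> (\<Inter>i<l. ?\<Gamma> (Gs i ^ j))) \<le> words.dim (?\<Gamma> (G ^ j))"
    unfolding Gj by (rule words.dim_subset_of_finite_span[OF fin codes(2)])
  moreover have "int (words.dim (words n \<inter> (\<Inter>i<l. ?\<Gamma> (Gs i ^ j))))
      \<ge> int n - (\<Sum>i<l. int n - int (words.dim (?\<Gamma> (Gs i ^ j))))"
    using words.dim_Inter_ge[OF fin codes] unfolding span_unit_words dim_unit_words .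
  ultimately show ?thesis
    by (simp add: code_dim_def)
qed

end
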